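(* Let $\mathcal{D}$ be an $S(2,k,v)$ on element set $V$ and $G_1=1$-$\mathrm{BIG}(\mathcal{D})$. (a) If $\mathcal{D}$ has a parallel class, then $\alpha(G_1)=v/k$, and for every $\alpha$-set $I$ of $G_1$, every vertex of $V(G_1)\setminus I$ is adjacent to exactly $k$ vertices of $I$; in particular $|X_1|=\dots=|X_{k-1}|=0$ and $|X_k|=\frac{v(v-k)}{k(k-1)}$. (b) If $\mathcal{D}$ has a near parallel class, then $\alpha(G_1)=(v-1)/k$, and for every $\alpha$-set $I$, every vertex of $V(G_1)\setminus I$ is adjacent to either $k-1$ or $k$ vertices of $I$, with $|X_1|=\dots=|X_{k-2}|=0$, $|X_{k-1}|=\frac{v-1}{k-1}$ and $|X_k|=\frac{(v-1)(v-2k+1)}{k(k-1)}$.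
   Context: A Steiner $2$-design $S(2,k,v)$ ($2<k<v$) is a pair $(V,\mathcal{B})$ with $|V|=v$ and $\mathcal{B}$ a collection of $k$-subsets of $V$ (blocks) such that every $2$-subset of $V$ lies in exactly one block. A partial parallel class is a set of pairwise disjoint blocks; a parallel class is a set of blocks partitioning $V$; a near parallel class is a partial parallel class whose union is $V$ minus a single element. The $1$-block intersection graph $1$-$\mathrm{BIG}(\mathcal{D})$ has the blocks as vertices, two blocks adjacent iff they intersect in exactly one element. $\alpha(G)$ is the independence number and an $\alpha$-set is a maximum independent set. For an $\alpha$-set $I$ of a graph $G$ and $i\ge1$, $X_i$ is the set of vertices $u\in V(G)\setminus I$ adjacent to exactly $i$ vertices of $I$. *)

theory Defs
  imports Complex_Main
begin

definition steiner_2_design :: "'a set \<Rightarrow> 'a set set \<Rightarrow> nat \<Rightarrow> nat \<Rightarrow> bool" where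
  "steiner_2_design V B k v \<longleftrightarrow>
     finite V \<and> card V = v \<and> 2 < k \<and> k < v \<and>
     (\<forall>b\<in>B. b \<subseteq> V \<and> card b = k) \<and>
     (\<forall>x\<in>V. \<forall>y\<in>V. x \<noteq> y \<longrightarrow> (\<exists>!b. b \<in> B \<and> {x, y} \<subseteq> b))"

definition partial_parallel_class :: "'a set set \<Rightarrow> 'a set set \<Rightarrow> bool" where
  "partial_parallel_class B P \<longleftrightarrow> P \<subseteq> B \<and> (\<forall>b\<in>P. \<forall>c\<in>P. b \<noteq> c \<longrightarrow> b \<inter> c = {})"

definition parallel_class :: "'a set \<Rightarrow> 'a set set \<Rightarrow> 'a set set \<Rightarrow> bool" where
  "parallel_class V B P \<longleftrightarrow> partial_parallel_class B P \<and> \<Union>P = V"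

definition near_parallel_class :: "'a set \<Rightarrow> 'a set set \<Rightarrow> 'a set set \<Rightarrow> bool" where
  "near_parallel_class V B P \<longleftrightarrow> partial_parallel_class B P \<and> (\<exists>x\<in>V. \<Union>P = V - {x})"

text \<open>The 1-block intersection graph: vertex set B, adjacency = meeting in exactly one point.\<close>
definition big1_adj :: "'a set set \<Rightarrow> 'a set \<Rightarrow> 'a set \<Rightarrow> bool" where
  "big1_adj B b c \<longleftrightarrow> b \<in> B \<and> c \<in> B \<and> card (b \<inter> c) = 1"

definition big1_indep :: "'a set set \<Rightarrow> 'a set set \<Rightarrow> bool" where
  "big1_indep B I \<longleftrightarrow> I \<subseteq> B \<and> (\<forall>b\<in>I. \<forall>c\<in>I. \<not> big1_adj B b c)"

definition big1_alpha :: "'a set set \<Rightarrow> nat" where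
  "big1_alpha B = Max (card ` {I. big1_indep B I})"

definition big1_alpha_set :: "'a set set \<Rightarrow> 'a set set \<Rightarrow> bool" where
  "big1_alpha_set B I \<longleftrightarrow> big1_indep B I \<and> card I = big1_alpha B"

definition nbrs_in :: "'a set set \<Rightarrow> 'a set set \<Rightarrow> 'a set \<Rightarrow> nat" where
  "nbrs_in B I u = card {c\<in>I. big1_adj B u c}"

definition X_set :: "'a set set \<Rightarrow> 'a set set \<Rightarrow> nat \<Rightarrow> 'a set set" where
  "X_set B I i = {u \<in> B - I. nbrs_in B I u = i}"

end

theory Submission
  imports Defs
begin

(*
  Two distinct blocks of a Steiner 2-design meet in at most one point, so two
  blocks are non-adjacent in 1-BIG exactly when they are disjoint: the
  independent sets are precisely the partial parallel classes.  Hence an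
  independent set I covers |I|*k <= v points, and a block u outside I has as
  many neighbours in I as it has points covered by I, i.e. k minus the number
  of its points left uncovered by I.

  A (near) parallel class P is independent and |P|+1 blocks no longer fit into
  V, so alpha = |P|.  Every alpha-set I then leaves exactly the same number of
  points uncovered as P does: none (parallel case) or a single point y (near
  parallel case).  The neighbour counts follow, and the sizes of the X_i are
  computed from the number of blocks v(v-1)/(k(k-1)) and the replication
  number (v-1)/(k-1) of the point y.
*)

definition blocks_through :: "'a set set \<Rightarrow> 'a \<Rightarrow> 'a set set" where
  "blocks_through B x = {b \<in> B. x \<in> b}"

lemma real_card_Diff:
  assumes "finite A" "C \<subseteq> A"
  shows "real (card (A - C)) = real (card A) - real (card C)"
  using assms card_Diff_subset[OF finite_subset[OF assms(2,1)] assms(2)] card_mono[OF assms]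
  by (simp add: of_nat_diff)

lemma near_parallel_count_identity:
  fixes k v :: real
  assumes "k \<noteq> 0" "k - 1 \<noteq> 0"
  shows "v * (v - 1) / (k * (k - 1)) - (v - 1) / k - (v - 1) / (k - 1)
       = (v - 1) * (v - 2 * k + 1) / (k * (k - 1))"
proof -
  have "(v - 1) / k = (v - 1) * (k - 1) / (k * (k - 1))"
    and "(v - 1) / (k - 1) = (v - 1) * k / (k * (k - 1))" using assms by auto
  then show ?thesis by (simp add: diff_divide_distrib[symmetric] algebra_simps)
qed

context
  fixes V :: "'a set" and B :: "'a set set" and k v :: nat
  assumes design: "steiner_2_design V B k v"
begin

lemma finite_points: "finite V" and card_points: "card V = v"
  and k_gt_2: "2 < k" and k_less_v: "k < v"
  and block: "\<And>b. b \<in> B \<Longrightarrow> b \<subseteq> V \<and> card b = k"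
  and unique_block: "\<And>x y. x \<in> V \<Longrightarrow> y \<in> V \<Longrightarrow> x \<noteq> y \<Longrightarrow> \<exists>!b. b \<in> B \<and> {x, y} \<subseteq> b"
  using design unfolding steiner_2_design_def by auto

lemma finite_blocks: "finite B"
  using block finite_points by (metis Pow_iff finite_Pow_iff finite_subset subsetI)

lemma finite_block: "b \<in> B \<Longrightarrow> finite b"
  using block finite_points finite_subset by blast

text \<open>Two distinct blocks share at most one point, since a pair lies in a unique block.\<close>
lemma block_inter_le_1:
  assumes "b \<in> B" "c \<in> B" "b \<noteq> c"
  shows "card (b \<inter> c) \<le> 1"
proof (rule ccontr)
  assume "\<not> card (b \<inter> c) \<le> 1"
  then obtain x y where xy: "x \<in> b \<inter> c" "y \<in> b \<inter> c" "x \<noteq> y"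
    using finite_block assms by (metis One_nat_def card_le_Suc0_iff_eq finite_Int)
  then have "x \<in> V" "y \<in> V" using block assms by auto
  with xy have "\<exists>!d. d \<in> B \<and> {x, y} \<subseteq> d" using unique_block by blast
  with assms xy show False by auto
qed

lemma not_adj_iff_disjoint:
  assumes "b \<in> B" "c \<in> B" "b \<noteq> c"
  shows "\<not> big1_adj B b c \<longleftrightarrow> b \<inter> c = {}"
  using block_inter_le_1[OF assms] finite_block assms
  unfolding big1_adj_def by (auto simp: le_Suc_eq)

lemma indep_disjoint:
  assumes "big1_indep B I" "b \<in> I" "c \<in> I" "b \<noteq> c"
  shows "b \<inter> c = {}"
  using assms not_adj_iff_disjoint unfolding big1_indep_def by blast

lemma partial_parallel_class_indep: "partial_parallel_class B P \<Longrightarrow> big1_indep B P"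
  unfolding partial_parallel_class_def big1_indep_def big1_adj_def
  using block k_gt_2 by fastforce

lemma indep_finite: "big1_indep B I \<Longrightarrow> finite I"
  unfolding big1_indep_def using finite_blocks finite_subset by blast

lemma card_Union_indep:
  assumes "big1_indep B I"
  shows "card (\<Union>I) = card I * k" and "\<Union>I \<subseteq> V"
proof -
  have IB: "I \<subseteq> B" using assms unfolding big1_indep_def by auto
  have "card (\<Union>I) = sum card I"
    using indep_disjoint[OF assms] IB finite_block
    by (intro card_Union_disjoint) (auto simp: pairwise_def disjnt_def)
  also have "\<dots> = (\<Sum>b\<in>I. k)" using IB block by (intro sum.cong) auto
  finally show "card (\<Union>I) = card I * k" by simp
  show "\<Union>I \<subseteq> V" using IB block by auto
qed

lemma indep_card_bound: "big1_indep B I \<Longrightarrow> card I * k \<le> v"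
  using card_Union_indep card_mono[OF finite_points] card_points by metis

lemma nbrs_in_eq_card_covered:
  assumes I: "big1_indep B I" and u: "u \<in> B - I"
  shows "nbrs_in B I u = card (u \<inter> \<Union>I)"
proof -
  have IB: "I \<subseteq> B" using I unfolding big1_indep_def by auto
  have fin: "finite I" using indep_finite[OF I] .
  have "u \<inter> \<Union>I = (\<Union>c\<in>I. u \<inter> c)" by blast
  then have "card (u \<inter> \<Union>I) = card (\<Union>c\<in>I. u \<inter> c)" by simp
  also have "\<dots> = (\<Sum>c\<in>I. card (u \<inter> c))"
  proof (rule card_UN_disjoint[OF fin])
    show "\<forall>c\<in>I. finite (u \<inter> c)" using finite_block u by auto
    show "\<forall>i\<in>I. \<forall>j\<in>I. i \<noteq> j \<longrightarrow> (u \<inter> i) \<inter> (u \<inter> j) = {}"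
      using indep_disjoint[OF I] by blast
  qed
  also have "\<dots> = (\<Sum>c\<in>I. of_bool (big1_adj B u c))"
  proof (rule sum.cong)
    fix c assume c: "c \<in> I"
    then have uc: "u \<in> B" "c \<in> B" "u \<noteq> c" using IB u by auto
    show "card (u \<inter> c) = of_bool (big1_adj B u c)"
      using block_inter_le_1[OF uc] uc unfolding big1_adj_def by (cases "card (u \<inter> c) = 1") auto
  qed simp
  also have "\<dots> = nbrs_in B I u"
    using fin unfolding nbrs_in_def by (simp add: Collect_conj_eq Int_commute)
  finally show ?thesis by simp
qed

lemma nbrs_in_eq_k_minus_uncovered:
  assumes "big1_indep B I" "u \<in> B - I"
  shows "nbrs_in B I u = k - card (u - \<Union>I)"
proof -
  have "finite u" "card u = k" using assms(2) block finite_block by auto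
  then have "k = card (u \<inter> \<Union>I) + card (u - \<Union>I)" using card_Int_Diff by metis
  then show ?thesis using nbrs_in_eq_card_covered[OF assms] by linarith
qed

lemma replication_number:
  assumes x: "x \<in> V"
  shows "real (card (blocks_through B x)) = (real v - 1) / (real k - 1)"
proof -
  let ?Bx = "blocks_through B x"
  have cover: "V - {x} = (\<Union>b\<in>?Bx. b - {x})"
  proof
    show "V - {x} \<subseteq> (\<Union>b\<in>?Bx. b - {x})"
    proof
      fix y assume y: "y \<in> V - {x}"
      then obtain b where "b \<in> B" "{x, y} \<subseteq> b" using unique_block[OF x, of y] by blast
      with y show "y \<in> (\<Union>b\<in>?Bx. b - {x})" unfolding blocks_through_def by auto
    qed
    show "(\<Union>b\<in>?Bx. b - {x}) \<subseteq> V - {x}" using block unfolding blocks_through_def by auto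
  qed
  have "v - 1 = card (V - {x})" using card_points finite_points x by simp
  also have "\<dots> = (\<Sum>b\<in>?Bx. card (b - {x}))"
    unfolding cover
  proof (rule card_UN_disjoint)
    show "finite ?Bx" using finite_blocks unfolding blocks_through_def by simp
    show "\<forall>b\<in>?Bx. finite (b - {x})" using finite_block unfolding blocks_through_def by auto
    show "\<forall>b\<in>?Bx. \<forall>c\<in>?Bx. b \<noteq> c \<longrightarrow> (b - {x}) \<inter> (c - {x}) = {}"
    proof (intro ballI impI)
      fix b c assume b: "b \<in> ?Bx" and c: "c \<in> ?Bx" and "b \<noteq> c"
      then have "card (b \<inter> c) \<le> 1" using block_inter_le_1 unfolding blocks_through_def by simp
      moreover have "x \<in> b \<inter> c" "finite (b \<inter> c)"
        using b c finite_block unfolding blocks_through_def by auto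
      ultimately have "b \<inter> c = {x}" by (metis One_nat_def card_le_Suc0_iff_eq singletonI subsetI
            subset_singletonD empty_iff)
      then show "(b - {x}) \<inter> (c - {x}) = {}" by blast
    qed
  qed
  also have "\<dots> = (\<Sum>b\<in>?Bx. k - 1)"
    using block finite_block unfolding blocks_through_def by (intro sum.cong) auto
  finally have "real (card ?Bx * (k - 1)) = real (v - 1)" by simp
  then have "real (card ?Bx) * (real k - 1) = real v - 1"
    using k_gt_2 k_less_v by (simp add: of_nat_diff)
  moreover have "real k - 1 \<noteq> 0" using k_gt_2 by simp
  ultimately show ?thesis by (simp add: field_simps)
qed

text \<open>Number of blocks, by double counting incident point-block pairs.\<close>
lemma number_of_blocks: "real (card B) = real v * (real v - 1) / (real k * (real k - 1))"
proof -
  have "real (card B) * real k = (\<Sum>b\<in>B. real (card b))"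
    using block by simp
  also have "\<dots> = (\<Sum>b\<in>B. \<Sum>x\<in>V. of_bool (x \<in> b))"
  proof (rule sum.cong)
    fix b assume "b \<in> B"
    then have "V \<inter> {x. x \<in> b} = b" using block by auto
    then show "real (card b) = (\<Sum>x\<in>V. of_bool (x \<in> b))" using finite_points by simp
  qed simp
  also have "\<dots> = (\<Sum>x\<in>V. \<Sum>b\<in>B. of_bool (x \<in> b))" by (rule sum.swap)
  also have "\<dots> = (\<Sum>x\<in>V. real (card (blocks_through B x)))"
    using finite_blocks unfolding blocks_through_def by (simp add: Int_def)
  also have "\<dots> = real v * ((real v - 1) / (real k - 1))"
    using replication_number card_points by simp
  finally have "real (card B) * real k = real v * ((real v - 1) / (real k - 1))" .
  moreover have "real k \<noteq> 0" "real k - 1 \<noteq> 0" using k_gt_2 by auto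
  ultimately show ?thesis by (simp add: field_simps)
qed

lemma alpha_eq_card:
  assumes P: "big1_indep B P" and tight: "v < Suc (card P) * k"
  shows "big1_alpha B = card P"
proof -
  have "card I \<le> card P" if "big1_indep B I" for I
  proof (rule ccontr)
    assume "\<not> card I \<le> card P"
    then have "Suc (card P) * k \<le> card I * k" by (intro mult_le_mono1) simp
    with indep_card_bound[OF that] tight show False by simp
  qed
  moreover have "{I. big1_indep B I} \<subseteq> Pow B" unfolding big1_indep_def by auto
  then have "finite {I. big1_indep B I}" using finite_blocks finite_subset by blast
  ultimately show ?thesis
    unfolding big1_alpha_def using P by (intro Max_eqI) auto
qed

lemma alpha_set_uncovered:
  assumes P: "big1_indep B P" and tight: "v < Suc (card P) * k"
    and I: "big1_alpha_set B I"
  shows "card (V - \<Union>I) = v - card P * k"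
proof -
  have "card I = card P" using I alpha_eq_card[OF P tight] unfolding big1_alpha_set_def by simp
  moreover have "big1_indep B I" using I unfolding big1_alpha_set_def by simp
  ultimately show ?thesis
    using card_Union_indep card_points finite_points by (metis card_Diff_subset finite_subset)
qed

lemma card_outside_indep:
  "big1_indep B I \<Longrightarrow> real (card (B - I)) = real (card B) - real (card I)"
  using real_card_Diff[OF finite_blocks] unfolding big1_indep_def by simp

lemma parallel_class_case:
  assumes "parallel_class V B P"
  shows "real (big1_alpha B) = real v / real k \<and>
    (\<forall>I. big1_alpha_set B I \<longrightarrow>
       (\<forall>u\<in>B - I. nbrs_in B I u = k) \<and>
       (\<forall>i. 1 \<le> i \<and> i \<le> k - 1 \<longrightarrow> card (X_set B I i) = 0) \<and>
       real (card (X_set B I k)) = real v * (real v - real k) / (real k * (real k - 1)))"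
proof -
  have P: "big1_indep B P" and UP: "\<Union>P = V"
    using assms partial_parallel_class_indep unfolding parallel_class_def by auto
  have cP: "card P * k = v" using card_Union_indep(1)[OF P] UP card_points by simp
  have tight: "v < Suc (card P) * k" using cP k_gt_2 by simp
  have alpha: "big1_alpha B = card P" using alpha_eq_card[OF P tight] .
  have "real (card P) * real k = real v" using cP by (metis of_nat_mult)
  then have real_cP: "real (card P) = real v / real k"
    using k_gt_2 by (simp add: field_simps)
  have "(\<forall>u\<in>B - I. nbrs_in B I u = k) \<and>
       (\<forall>i. 1 \<le> i \<and> i \<le> k - 1 \<longrightarrow> card (X_set B I i) = 0) \<and>
       real (card (X_set B I k)) = real v * (real v - real k) / (real k * (real k - 1))"
    if I: "big1_alpha_set B I" for I
  proof -
    have Ii: "big1_indep B I" and cI: "card I = card P"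
      using I alpha unfolding big1_alpha_set_def by auto
    have "card (V - \<Union>I) = 0" using alpha_set_uncovered[OF P tight I] cP by simp
    then have cover: "\<Union>I = V"
      using card_Union_indep(2)[OF Ii] finite_points by auto
    have nbrs: "nbrs_in B I u = k" if u: "u \<in> B - I" for u
    proof -
      have "u - \<Union>I = {}" using cover block u by auto
      then show ?thesis using nbrs_in_eq_k_minus_uncovered[OF Ii u] by (metis card.empty diff_zero)
    qed
    have XK: "X_set B I k = B - I" using nbrs unfolding X_set_def by auto
    have "real (card (X_set B I k)) = real (card B) - real (card P)"
      using XK card_outside_indep[OF Ii] cI by simp
    also have "\<dots> = real v * (real v - real k) / (real k * (real k - 1))"
      using number_of_blocks real_cP k_gt_2 by (simp add: field_simps)
    finally have XK_card: "real (card (X_set B I k)) =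
        real v * (real v - real k) / (real k * (real k - 1))" .
    have "X_set B I i = {}" if "1 \<le> i \<and> i \<le> k - 1" for i
      using nbrs that k_gt_2 unfolding X_set_def by auto
    then show ?thesis using nbrs XK_card by simp
  qed
  then show ?thesis using alpha real_cP by simp
qed

lemma near_parallel_class_case:
  assumes "near_parallel_class V B P"
  shows "real (big1_alpha B) = (real v - 1) / real k \<and>
    (\<forall>I. big1_alpha_set B I \<longrightarrow>
       (\<forall>u\<in>B - I. nbrs_in B I u = k - 1 \<or> nbrs_in B I u = k) \<and>
       (\<forall>i. 1 \<le> i \<and> i \<le> k - 2 \<longrightarrow> card (X_set B I i) = 0) \<and>
       real (card (X_set B I (k - 1))) = (real v - 1) / (real k - 1) \<and>
       real (card (X_set B I k)) =
         (real v - 1) * (real v - 2 * real k + 1) / (real k * (real k - 1)))"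
proof -
  obtain x where P: "big1_indep B P" and x: "x \<in> V" "\<Union>P = V - {x}"
    using assms partial_parallel_class_indep unfolding near_parallel_class_def by auto
  have cP: "card P * k = v - 1"
    using card_Union_indep(1)[OF P] x card_points finite_points by simp
  have tight: "v < Suc (card P) * k" using cP k_gt_2 k_less_v by simp
  have alpha: "big1_alpha B = card P" using alpha_eq_card[OF P tight] .
  have "real (card P * k) = real (v - 1)" using cP by simp
  then have "real (card P) * real k = real v - 1" using k_less_v by (simp add: of_nat_diff)
  then have real_cP: "real (card P) = (real v - 1) / real k"
    using k_gt_2 by (simp add: field_simps)
  have "(\<forall>u\<in>B - I. nbrs_in B I u = k - 1 \<or> nbrs_in B I u = k) \<and>
       (\<forall>i. 1 \<le> i \<and> i \<le> k - 2 \<longrightarrow> card (X_set B I i) = 0) \<and>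
       real (card (X_set B I (k - 1))) = (real v - 1) / (real k - 1) \<and>
       real (card (X_set B I k)) =
         (real v - 1) * (real v - 2 * real k + 1) / (real k * (real k - 1))"
    if I: "big1_alpha_set B I" for I
  proof -
    have Ii: "big1_indep B I" and cI: "card I = card P"
      using I alpha unfolding big1_alpha_set_def by auto
    have "card (V - \<Union>I) = 1"
      using alpha_set_uncovered[OF P tight I] cP k_less_v by simp
    then obtain y where y: "V - \<Union>I = {y}" by (metis One_nat_def card_1_singleton_iff)
    have yV: "y \<in> V" using y by auto
    have nbrs: "nbrs_in B I u = (if y \<in> u then k - 1 else k)" if u: "u \<in> B - I" for u
    proof -
      have "u - \<Union>I = u \<inter> {y}" using y block u by blast
      then show ?thesis using nbrs_in_eq_k_minus_uncovered[OF Ii u] by simp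
    qed
    have ByI: "blocks_through B y \<subseteq> B - I" using y unfolding blocks_through_def by auto
    have X_member: "u \<in> X_set B I j \<longleftrightarrow> u \<in> B - I \<and> j = (if y \<in> u then k - 1 else k)"
      for u j
      using nbrs unfolding X_set_def by auto
    have XK1: "X_set B I (k - 1) = blocks_through B y"
    proof (rule set_eqI)
      fix u show "u \<in> X_set B I (k - 1) \<longleftrightarrow> u \<in> blocks_through B y"
        using X_member[of u "k - 1"] ByI k_gt_2 by (cases "y \<in> u") (auto simp: blocks_through_def)
    qed
    have XK: "X_set B I k = (B - I) - blocks_through B y"
    proof (rule set_eqI)
      fix u show "u \<in> X_set B I k \<longleftrightarrow> u \<in> (B - I) - blocks_through B y"
        using X_member[of u k] k_gt_2 by (cases "y \<in> u") (auto simp: blocks_through_def)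
    qed
    have "finite (B - I)" using finite_blocks by simp
    then have "real (card (X_set B I k)) =
        real (card B) - real (card P) - real (card (blocks_through B y))"
      unfolding XK using real_card_Diff[OF _ ByI] card_outside_indep[OF Ii] cI by simp
    also have "\<dots> = (real v - 1) * (real v - 2 * real k + 1) / (real k * (real k - 1))"
      unfolding number_of_blocks real_cP replication_number[OF yV]
      using k_gt_2 by (intro near_parallel_count_identity) auto
    finally have XK_card: "real (card (X_set B I k)) =
        (real v - 1) * (real v - 2 * real k + 1) / (real k * (real k - 1))" .
    have "X_set B I i = {}" if i: "1 \<le> i \<and> i \<le> k - 2" for i
    proof -
      have "u \<notin> X_set B I i" for u
        using X_member[of u i] i k_gt_2 by (cases "y \<in> u") auto
      then show ?thesis by blast
    qed
    then show ?thesis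
      using nbrs XK_card XK1 replication_number[OF yV] by simp
  qed
  then show ?thesis using alpha real_cP by simp
qed

end

theorem mainTheorem5:
  fixes V :: "'a set" and B :: "'a set set" and k v :: nat
  assumes "steiner_2_design V B k v"
  shows "((\<exists>P. parallel_class V B P) \<longrightarrow>
            real (big1_alpha B) = real v / real k \<and>
            (\<forall>I. big1_alpha_set B I \<longrightarrow>
               (\<forall>u\<in>B - I. nbrs_in B I u = k) \<and>
               (\<forall>i. 1 \<le> i \<and> i \<le> k - 1 \<longrightarrow> card (X_set B I i) = 0) \<and>
               real (card (X_set B I k)) = real v * (real v - real k) / (real k * (real k - 1))))
       \<and> ((\<exists>P. near_parallel_class V B P) \<longrightarrow>
            real (big1_alpha B) = (real v - 1) / real k \<and>
            (\<forall>I. big1_alpha_set B I \<longrightarrow>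
               (\<forall>u\<in>B - I. nbrs_in B I u = k - 1 \<or> nbrs_in B I u = k) \<and>
               (\<forall>i. 1 \<le> i \<and> i \<le> k - 2 \<longrightarrow> card (X_set B I i) = 0) \<and>
               real (card (X_set B I (k - 1))) = (real v - 1) / (real k - 1) \<and>
               real (card (X_set B I k)) =
                 (real v - 1) * (real v - 2 * real k + 1) / (real k * (real k - 1))))"
  using parallel_class_case[OF assms] near_parallel_class_case[OF assms] by blast

end
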